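(* Let $\mathcal{S}$ be a temporal feedback graph on $T$ rounds with maximal orders $C_1,\dots,C_N$, and let $\boldsymbol\mu^*$ be any optimal solution to the upper bound dual program. Let $\mathcal{C}(\boldsymbol\mu^* )\subseteq[N]$ be the set of $c$ with $\sum_{t\in C_c}(\mu^*_t)^2=1$. Then there exists a subset $\mathcal{B}\subseteq\mathcal{C}(\boldsymbol\mu^* )$ with $|\mathcal{B}|\le T$ and an optimal solution $\boldsymbol\lambda^*$ of the upper bound program such that $\lambda^*_{c,t}=0$ for all $t$ whenever $c\notin\mathcal{B}$.
   Context: A temporal feedback graph $\mathcal{S}$ is a collection of subsets $S_t\subseteq[T]\setminus\{t\}$. An order is a sequence $t_1,\dots,t_w$ with $t_u\in S_{t_v}$ for all $u<v$; maximal if no super-sequence is an order. Upper bound program: minimize $\sum_{c=1}^N\sqrt{\sum_{t\in C_c}\lambda_{c,t}^2}$ subject to $\sum_{c}\lambda_{c,t}=1$ for all $t\in[T]$, $\lambda_{c,t}=0$ if $t\notin C_c$, $\lambda_{c,t}\ge0$. Upper bound dual program: maximize $\sum_{t=1}^T\mu_t$ subject to $\sum_{t\in C_c}\mu_t^2\le1$ for all $c\in[N]$, $\mu_t\ge0$. *)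

theory Defs
  imports Complex_Main "HOL-Library.Sublist"
begin

definition tfg :: "(nat \<Rightarrow> nat set) \<Rightarrow> nat \<Rightarrow> bool" where
  "tfg S T \<longleftrightarrow> (\<forall>t\<in>{1..T}. S t \<subseteq> {1..T} - {t})"

definition is_order :: "(nat \<Rightarrow> nat set) \<Rightarrow> nat \<Rightarrow> nat list \<Rightarrow> bool" where
  "is_order S T xs \<longleftrightarrow> set xs \<subseteq> {1..T} \<and>
     (\<forall>u v. u < v \<and> v < length xs \<longrightarrow> xs ! u \<in> S (xs ! v))"

definition maximal_order :: "(nat \<Rightarrow> nat set) \<Rightarrow> nat \<Rightarrow> nat list \<Rightarrow> bool" where
  "maximal_order S T xs \<longleftrightarrow> is_order S T xs \<and>
     \<not> (\<exists>ys. is_order S T ys \<and> subseq xs ys \<and> ys \<noteq> xs)"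

text \<open>The maximal orders C_1, ..., C_N serve directly as the index set.\<close>
definition max_orders :: "(nat \<Rightarrow> nat set) \<Rightarrow> nat \<Rightarrow> nat list set" where
  "max_orders S T = {xs. maximal_order S T xs}"

definition ub_feasible :: "(nat \<Rightarrow> nat set) \<Rightarrow> nat \<Rightarrow> (nat list \<Rightarrow> nat \<Rightarrow> real) \<Rightarrow> bool" where
  "ub_feasible S T lam \<longleftrightarrow>
     (\<forall>t\<in>{1..T}. (\<Sum>c\<in>max_orders S T. lam c t) = 1) \<and>
     (\<forall>c\<in>max_orders S T. \<forall>t. t \<notin> set c \<longrightarrow> lam c t = 0) \<and>
     (\<forall>c\<in>max_orders S T. \<forall>t. lam c t \<ge> 0)"

definition ub_obj :: "(nat \<Rightarrow> nat set) \<Rightarrow> nat \<Rightarrow> (nat list \<Rightarrow> nat \<Rightarrow> real) \<Rightarrow> real" where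
  "ub_obj S T lam = (\<Sum>c\<in>max_orders S T. sqrt (\<Sum>t\<in>set c. (lam c t)\<^sup>2))"

definition ub_optimal :: "(nat \<Rightarrow> nat set) \<Rightarrow> nat \<Rightarrow> (nat list \<Rightarrow> nat \<Rightarrow> real) \<Rightarrow> bool" where
  "ub_optimal S T lam \<longleftrightarrow> ub_feasible S T lam \<and>
     (\<forall>lam'. ub_feasible S T lam' \<longrightarrow> ub_obj S T lam \<le> ub_obj S T lam')"

definition dual_feasible :: "(nat \<Rightarrow> nat set) \<Rightarrow> nat \<Rightarrow> (nat \<Rightarrow> real) \<Rightarrow> bool" where
  "dual_feasible S T mu \<longleftrightarrow>
     (\<forall>c\<in>max_orders S T. (\<Sum>t\<in>set c. (mu t)\<^sup>2) \<le> 1) \<and>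
     (\<forall>t\<in>{1..T}. mu t \<ge> 0)"

definition dual_obj :: "nat \<Rightarrow> (nat \<Rightarrow> real) \<Rightarrow> real" where
  "dual_obj T mu = (\<Sum>t\<in>{1..T}. mu t)"

definition dual_optimal :: "(nat \<Rightarrow> nat set) \<Rightarrow> nat \<Rightarrow> (nat \<Rightarrow> real) \<Rightarrow> bool" where
  "dual_optimal S T mu \<longleftrightarrow> dual_feasible S T mu \<and>
     (\<forall>mu'. dual_feasible S T mu' \<longrightarrow> dual_obj T mu' \<le> dual_obj T mu)"

definition tight :: "(nat \<Rightarrow> nat set) \<Rightarrow> nat \<Rightarrow> (nat \<Rightarrow> real) \<Rightarrow> nat list set" where
  "tight S T mu = {c\<in>max_orders S T. (\<Sum>t\<in>set c. (mu t)\<^sup>2) = 1}"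

end

(*
  Optimality of mu means that no direction raises the dual objective while keeping every
  constraint sum_{t in C_c} mu_t^2 <= 1, so by Farkas' lemma the all-ones vector is a nonnegative
  combination sum_c a_c mu|C_c of the restrictions of mu to the tight orders. Caratheodory's
  theorem for cones shrinks the support of this combination to at most T orders. Then
  lambda_{c,t} = a_c mu_t is feasible for the upper bound program and has objective
  sum_c a_c = sum_t mu_t, so it is optimal by weak duality, which is Cauchy-Schwarz on each order.
*)
theory Submission
  imports Defs "HOL-Analysis.L2_Norm"
begin

section \<open>Conic combinations in coordinate spaces\<close>

definition proj_along :: "'i set \<Rightarrow> ('i \<Rightarrow> real) \<Rightarrow> ('i \<Rightarrow> real) \<Rightarrow> ('i \<Rightarrow> real) \<Rightarrow> 'i \<Rightarrow> real"
  where "proj_along I y w u = (\<lambda>t. u t - (\<Sum>s\<in>I. y s * u s) / (\<Sum>s\<in>I. y s * w s) * w t)"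

lemma proj_along_self:
  assumes "(\<Sum>s\<in>I. y s * w s) \<noteq> 0"
  shows "proj_along I y w w = (\<lambda>_. 0)"
  using assms by (simp add: proj_along_def)

lemma sum_mult_proj_along_adjoint:
  "(\<Sum>t\<in>I. z t * proj_along I y w u t) = (\<Sum>t\<in>I. proj_along I w y z t * u t)"
proof -
  have left: "(\<Sum>t\<in>I. z t * (u t - c * w t)) = (\<Sum>t\<in>I. z t * u t) - c * (\<Sum>t\<in>I. z t * w t)"
    and right: "(\<Sum>t\<in>I. (z t - c * y t) * u t) = (\<Sum>t\<in>I. z t * u t) - c * (\<Sum>t\<in>I. y t * u t)"
    for c
    by (simp_all add: sum_subtractf sum_distrib_left algebra_simps)
  show ?thesis
    unfolding proj_along_def left right by (simp add: mult.commute)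
qed

lemma cone_insert_of_proj_along_cone:
  fixes v :: "'k \<Rightarrow> 'i \<Rightarrow> real"
  assumes "0 < (\<Sum>t\<in>I. y t * w t)" "0 \<le> (\<Sum>t\<in>I. y t * b t)"
    and "\<forall>k\<in>K. (\<Sum>t\<in>I. y t * v k t) \<le> 0" "\<forall>k\<in>K. 0 \<le> a k"
    and "\<forall>t\<in>I. proj_along I y w b t = (\<Sum>k\<in>K. a k * proj_along I y w (v k) t)"
  obtains \<beta> where "0 \<le> \<beta>" "\<forall>t\<in>I. b t = (\<Sum>k\<in>K. a k * v k t) + \<beta> * w t"
proof
  let ?\<alpha> = "\<Sum>t\<in>I. y t * w t"
  define \<beta> where "\<beta> = ((\<Sum>t\<in>I. y t * b t) - (\<Sum>k\<in>K. a k * (\<Sum>t\<in>I. y t * v k t))) / ?\<alpha>"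
  have "(\<Sum>k\<in>K. a k * (\<Sum>t\<in>I. y t * v k t)) \<le> 0"
    using assms(3,4) by (intro sum_nonpos) (simp add: mult_nonneg_nonpos)
  then show "0 \<le> \<beta>" unfolding \<beta>_def using assms(1,2) by simp
  show "\<forall>t\<in>I. b t = (\<Sum>k\<in>K. a k * v k t) + \<beta> * w t"
  proof
    fix t assume "t \<in> I"
    have "(\<Sum>k\<in>K. a k * proj_along I y w (v k) t) =
        (\<Sum>k\<in>K. a k * v k t) - (\<Sum>k\<in>K. a k * (\<Sum>s\<in>I. y s * v k s)) / ?\<alpha> * w t"
      unfolding proj_along_def
      by (simp add: sum_subtractf sum_distrib_left sum_distrib_right sum_divide_distrib algebra_simps)
    then show "b t = (\<Sum>k\<in>K. a k * v k t) + \<beta> * w t"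
      using assms(5) \<open>t \<in> I\<close> by (simp add: proj_along_def \<beta>_def diff_divide_distrib algebra_simps)
  qed
qed

lemma farkas_alternative:
  fixes v :: "'k \<Rightarrow> 'i \<Rightarrow> real" and b :: "'i \<Rightarrow> real"
  assumes "finite K" and "finite I"
  shows "(\<exists>a. (\<forall>k\<in>K. 0 \<le> a k) \<and> (\<forall>t\<in>I. b t = (\<Sum>k\<in>K. a k * v k t))) \<or>
         (\<exists>y. (\<forall>k\<in>K. (\<Sum>t\<in>I. y t * v k t) \<le> 0) \<and> 0 < (\<Sum>t\<in>I. y t * b t))"
  using assms(1)
proof (induction K arbitrary: v b rule: finite_induct)
  case empty
  show ?case
  proof (cases "\<forall>t\<in>I. b t = 0")
    case False
    then obtain t0 where "t0 \<in> I" "b t0 \<noteq> 0" by auto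
    then have "0 < b t0 * b t0" by (metis not_real_square_gt_zero)
    also have "\<dots> \<le> (\<Sum>t\<in>I. b t * b t)"
      using \<open>t0 \<in> I\<close> assms(2) by (intro member_le_sum) auto
    finally show ?thesis by blast
  qed simp
next
  case (insert k0 K)
  let ?w = "v k0"
  have extend: "(\<Sum>k\<in>insert k0 K. (if k = k0 then \<beta> else a k) * v k t) = (\<Sum>k\<in>K. a k * v k t) + \<beta> * ?w t"
    for a \<beta> t
    using insert.hyps by (auto intro: sum.cong)
  from insert.IH[of b v] show ?case
  proof (elim disjE exE conjE)
    fix a assume "\<forall>k\<in>K. 0 \<le> a k" "\<forall>t\<in>I. b t = (\<Sum>k\<in>K. a k * v k t)"
    then show ?thesis
      by (intro disjI1 exI[of _ "\<lambda>k. if k = k0 then 0 else a k"]) (simp add: extend)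
  next
    fix y assume y: "\<forall>k\<in>K. (\<Sum>t\<in>I. y t * v k t) \<le> 0" "0 < (\<Sum>t\<in>I. y t * b t)"
    show ?thesis
    proof (cases "(\<Sum>t\<in>I. y t * ?w t) \<le> 0")
      case True
      then show ?thesis using y by auto
    next
      case False
      \<comment> \<open>Otherwise pass to the hyperplane orthogonal to \<open>y\<close>, projecting along \<open>w\<close>.\<close>
      let ?p = "proj_along I y ?w"
      from insert.IH[of "?p b" "\<lambda>k. ?p (v k)"] show ?thesis
      proof (elim disjE exE conjE)
        fix a assume a: "\<forall>k\<in>K. 0 \<le> a k" "\<forall>t\<in>I. ?p b t = (\<Sum>k\<in>K. a k * ?p (v k) t)"
        have "0 < (\<Sum>t\<in>I. y t * ?w t)" "0 \<le> (\<Sum>t\<in>I. y t * b t)"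
          using False y(2) by simp_all
        then obtain \<beta> where "0 \<le> \<beta>" "\<forall>t\<in>I. b t = (\<Sum>k\<in>K. a k * v k t) + \<beta> * ?w t"
          by (rule cone_insert_of_proj_along_cone[OF _ _ y(1) a])
        then show ?thesis
          using a(1) by (intro disjI1 exI[of _ "\<lambda>k. if k = k0 then \<beta> else a k"]) (simp add: extend)
      next
        fix z assume z: "\<forall>k\<in>K. (\<Sum>t\<in>I. z t * ?p (v k) t) \<le> 0" "0 < (\<Sum>t\<in>I. z t * ?p b t)"
        have "?p ?w = (\<lambda>_. 0)"
          using False by (intro proj_along_self) simp
        then show ?thesis
          using z by (intro disjI2 exI[of _ "proj_along I ?w y z"])
            (simp add: sum_mult_proj_along_adjoint[symmetric])
      qed
    qed
  qed
qed

lemma exists_linear_dependence: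
  fixes v :: "'k \<Rightarrow> 'i \<Rightarrow> real"
  assumes "finite I" and "card I < card K"
  shows "\<exists>c. (\<exists>k\<in>K. c k \<noteq> 0) \<and> (\<forall>t\<in>I. (\<Sum>k\<in>K. c k * v k t) = 0)"
  using assms
proof (induction I arbitrary: K v rule: finite_induct)
  case empty
  then have "K \<noteq> {}" by auto
  then show ?case by (intro exI[of _ "\<lambda>_. 1"]) auto
next
  case (insert i J)
  have "finite K" using insert.prems card.infinite by fastforce
  show ?case
  proof (cases "\<forall>k\<in>K. v k i = 0")
    case True
    moreover have "card J < card K" using insert by simp
    ultimately show ?thesis using insert.IH[of K v] by auto
  next
    case False
    then obtain k0 where k0: "k0 \<in> K" "v k0 i \<noteq> 0" by auto
    \<comment> \<open>Gaussian elimination: use \<open>v k0\<close> to clear coordinate \<open>i\<close> of the other vectors.\<close>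
    define v' where "v' k = (\<lambda>t. v k t - v k i / v k0 i * v k0 t)" for k
    have "card J < card (K - {k0})" using insert k0 \<open>finite K\<close> by simp
    then obtain c where c: "\<exists>k\<in>K - {k0}. c k \<noteq> 0" "\<forall>t\<in>J. (\<Sum>k\<in>K - {k0}. c k * v' k t) = 0"
      using insert.IH by blast
    define c' where "c' = c(k0 := - (\<Sum>k\<in>K - {k0}. c k * v k i) / v k0 i)"
    have combination: "(\<Sum>k\<in>K. c' k * v k t) = (\<Sum>k\<in>K - {k0}. c k * v' k t)" for t
    proof -
      have "(\<Sum>k\<in>K. c' k * v k t) = c' k0 * v k0 t + (\<Sum>k\<in>K - {k0}. c' k * v k t)"
        using k0 \<open>finite K\<close> by (simp add: sum.remove)
      also have "(\<Sum>k\<in>K - {k0}. c' k * v k t) = (\<Sum>k\<in>K - {k0}. c k * v k t)"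
        unfolding c'_def by (intro sum.cong) auto
      finally show ?thesis
        unfolding v'_def c'_def
        by (simp add: sum_subtractf sum_distrib_left sum_distrib_right sum_divide_distrib algebra_simps)
    qed
    have "(\<Sum>k\<in>K. c' k * v k t) = 0" if "t \<in> insert i J" for t
      using that c(2) k0(2) by (auto simp: combination v'_def)
    moreover have "\<exists>k\<in>K. c' k \<noteq> 0"
      using c(1) by (auto simp: c'_def)
    ultimately show ?thesis by blast
  qed
qed

lemma exists_linear_dependence_pos:
  fixes v :: "'k \<Rightarrow> 'i \<Rightarrow> real"
  assumes "finite I" and "card I < card K"
  obtains c where "\<exists>k\<in>K. 0 < c k" "\<forall>t\<in>I. (\<Sum>k\<in>K. c k * v k t) = 0"
proof -
  obtain c where c: "\<exists>k\<in>K. c k \<noteq> 0" "\<forall>t\<in>I. (\<Sum>k\<in>K. c k * v k t) = 0"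
    using exists_linear_dependence[OF assms] by blast
  show thesis
  proof (cases "\<exists>k\<in>K. 0 < c k")
    case False
    then have "\<exists>k\<in>K. 0 < - c k"
      using c(1) by (force simp: not_less)
    moreover have "\<forall>t\<in>I. (\<Sum>k\<in>K. - c k * v k t) = 0"
      using c(2) by (simp add: sum_negf)
    ultimately show thesis by (rule that)
  qed (use c that in blast)
qed

lemma conic_combination_remove_one:
  fixes v :: "'k \<Rightarrow> 'i \<Rightarrow> real"
  assumes "finite I" "finite K" "card I < card K"
    and "\<forall>k\<in>K. 0 \<le> a k" "\<forall>t\<in>I. b t = (\<Sum>k\<in>K. a k * v k t)"
  obtains k0 a' where "k0 \<in> K" "\<forall>k\<in>K - {k0}. 0 \<le> a' k"
    "\<forall>t\<in>I. b t = (\<Sum>k\<in>K - {k0}. a' k * v k t)"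
proof -
  obtain c where c: "\<exists>k\<in>K. 0 < c k" "\<forall>t\<in>I. (\<Sum>k\<in>K. c k * v k t) = 0"
    by (rule exists_linear_dependence_pos[OF assms(1,3)])
  \<comment> \<open>Move from \<open>a\<close> along \<open>-c\<close> until the first coefficient hits zero.\<close>
  define P where "P = {k\<in>K. 0 < c k}"
  have "finite P" "P \<noteq> {}" using assms(2) c(1) by (auto simp: P_def)
  define \<theta> where "\<theta> = Min ((\<lambda>k. a k / c k) ` P)"
  obtain k0 where k0: "k0 \<in> P" "\<theta> = a k0 / c k0"
    using Min_in[of "(\<lambda>k. a k / c k) ` P"] \<open>finite P\<close> \<open>P \<noteq> {}\<close> unfolding \<theta>_def by blast
  have "k0 \<in> K" "0 \<le> \<theta>" using k0 assms(4) by (auto simp: P_def)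
  define a' where "a' k = a k - \<theta> * c k" for k
  have "0 \<le> a' k" if "k \<in> K" for k
  proof (cases "0 < c k")
    case True
    then have "\<theta> \<le> a k / c k"
      using \<open>finite P\<close> that by (auto simp: \<theta>_def P_def)
    then show ?thesis using True by (simp add: a'_def pos_le_divide_eq)
  next
    case False
    then have "\<theta> * c k \<le> 0"
      using \<open>0 \<le> \<theta>\<close> by (simp add: mult_nonneg_nonpos)
    moreover have "0 \<le> a k" using assms(4) that by blast
    ultimately show ?thesis by (simp add: a'_def)
  qed
  moreover have "b t = (\<Sum>k\<in>K - {k0}. a' k * v k t)" if "t \<in> I" for t
  proof -
    have "b t = (\<Sum>k\<in>K. a k * v k t) - \<theta> * (\<Sum>k\<in>K. c k * v k t)"
      using that assms(5) c(2) by simp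
    also have "\<dots> = (\<Sum>k\<in>K. a' k * v k t)"
      by (simp add: a'_def sum_subtractf sum_distrib_left algebra_simps)
    also have "\<dots> = a' k0 * v k0 t + (\<Sum>k\<in>K - {k0}. a' k * v k t)"
      using sum.remove[OF assms(2) \<open>k0 \<in> K\<close>] .
    also have "a' k0 = 0"
      using k0 by (simp add: a'_def P_def)
    finally show ?thesis by simp
  qed
  ultimately show thesis using that \<open>k0 \<in> K\<close> by blast
qed

lemma conic_caratheodory:
  fixes v :: "'k \<Rightarrow> 'i \<Rightarrow> real"
  assumes "finite I" "finite K"
    and "\<forall>k\<in>K. 0 \<le> a k" "\<forall>t\<in>I. b t = (\<Sum>k\<in>K. a k * v k t)"
  shows "\<exists>B\<subseteq>K. card B \<le> card I \<and>
           (\<exists>a'. (\<forall>k\<in>B. 0 \<le> a' k) \<and> (\<forall>t\<in>I. b t = (\<Sum>k\<in>B. a' k * v k t)))"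
  using assms(2-)
proof (induction "card K" arbitrary: K a rule: less_induct)
  case less
  show ?case
  proof (cases "card K \<le> card I")
    case False
    then have "card I < card K" by simp
    then obtain k0 a' where k0: "k0 \<in> K" and a': "\<forall>k\<in>K - {k0}. 0 \<le> a' k"
      "\<forall>t\<in>I. b t = (\<Sum>k\<in>K - {k0}. a' k * v k t)"
      by (rule conic_combination_remove_one[OF assms(1) less.prems(1) _ less.prems(2,3)])
    have "card (K - {k0}) < card K"
      using less.prems(1) k0 by (rule card_Diff1_less)
    from less.hyps[OF this _ a'] less.prems(1) obtain B where
      "B \<subseteq> K - {k0}" "card B \<le> card I"
      "\<exists>a'. (\<forall>k\<in>B. 0 \<le> a' k) \<and> (\<forall>t\<in>I. b t = (\<Sum>k\<in>B. a' k * v k t))"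
      by auto
    then show ?thesis by (intro exI[of _ B]) auto
  qed (use less.prems in blast)
qed

section \<open>The upper bound program and its dual\<close>

lemma distinct_if_is_order:
  assumes "tfg S T" and "is_order S T xs"
  shows "distinct xs"
proof -
  have "xs ! i \<noteq> xs ! j" if "i < j" "j < length xs" for i j
  proof -
    have "xs ! j \<in> {1..T}" "xs ! i \<in> S (xs ! j)"
      using assms(2) that nth_mem[of j xs] unfolding is_order_def by blast+
    then show ?thesis using assms(1) by (auto simp: tfg_def)
  qed
  then show ?thesis unfolding distinct_conv_nth by (metis linorder_neqE_nat)
qed

lemma max_orders_subset: "c \<in> max_orders S T \<Longrightarrow> set c \<subseteq> {1..T}"
  by (simp add: max_orders_def maximal_order_def is_order_def)

lemma finite_max_orders:
  assumes "tfg S T"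
  shows "finite (max_orders S T)"
proof (rule finite_subset)
  show "max_orders S T \<subseteq> {xs. set xs \<subseteq> {1..T} \<and> length xs \<le> T}"
  proof safe
    fix xs assume xs: "xs \<in> max_orders S T"
    then have "distinct xs"
      using distinct_if_is_order[OF assms] by (simp add: max_orders_def maximal_order_def)
    then have "length xs = card (set xs)" by (simp add: distinct_card)
    also have "\<dots> \<le> card {1..T}" using max_orders_subset[OF xs] by (intro card_mono) auto
    finally show "length xs \<le> T" by simp
  qed (use max_orders_subset in blast)
  show "finite {xs. set xs \<subseteq> {1..T} \<and> length xs \<le> T}"
    by (rule finite_lists_length_le) simp
qed

lemma finite_tight: "tfg S T \<Longrightarrow> finite (tight S T mu)"
  using finite_max_orders by (auto simp: tight_def)

lemma weak_duality:
  assumes "tfg S T" "dual_feasible S T mu" "ub_feasible S T lam"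
  shows "dual_obj T mu \<le> ub_obj S T lam"
proof -
  let ?M = "max_orders S T"
  have "dual_obj T mu = (\<Sum>t\<in>{1..T}. mu t * (\<Sum>c\<in>?M. lam c t))"
    using assms(3) by (simp add: dual_obj_def ub_feasible_def)
  also have "\<dots> = (\<Sum>c\<in>?M. \<Sum>t\<in>{1..T}. mu t * lam c t)"
    unfolding sum_distrib_left by (rule sum.swap)
  also have "\<dots> = (\<Sum>c\<in>?M. \<Sum>t\<in>set c. mu t * lam c t)"
    using max_orders_subset assms(3)
    by (intro sum.cong refl sum.mono_neutral_right) (auto simp: ub_feasible_def)
  also have "\<dots> \<le> (\<Sum>c\<in>?M. sqrt (\<Sum>t\<in>set c. (lam c t)\<^sup>2))"
  proof (rule sum_mono)
    fix c assume "c \<in> ?M"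
    then have "L2_set mu (set c) \<le> 1"
      using assms(2) by (simp add: dual_feasible_def L2_set_def)
    have "(\<Sum>t\<in>set c. mu t * lam c t) \<le> (\<Sum>t\<in>set c. \<bar>mu t\<bar> * \<bar>lam c t\<bar>)"
      by (intro sum_mono) (metis abs_ge_self abs_mult)
    also have "\<dots> \<le> L2_set mu (set c) * L2_set (lam c) (set c)"
      by (rule L2_set_mult_ineq)
    also have "\<dots> \<le> L2_set (lam c) (set c)"
      using \<open>L2_set mu (set c) \<le> 1\<close> by (simp add: mult_left_le_one_le)
    finally show "(\<Sum>t\<in>set c. mu t * lam c t) \<le> sqrt (\<Sum>t\<in>set c. (lam c t)\<^sup>2)"
      by (simp add: L2_set_def)
  qed
  finally show ?thesis by (simp add: ub_obj_def)
qed

lemma ub_optimal_if_obj_eq_dual_obj: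
  assumes "tfg S T" "dual_feasible S T mu" "ub_feasible S T lam"
    and "ub_obj S T lam = dual_obj T mu"
  shows "ub_optimal S T lam"
  using assms weak_duality[OF assms(1,2)] by (simp add: ub_optimal_def)

lemma eventually_quadratic_le:
  fixes s m D r :: real
  assumes "s \<le> r" and "s = r \<Longrightarrow> m < 0"
  shows "eventually (\<lambda>e. s + e * (m + e * D) \<le> r) (at_right 0)"
proof (cases "s = r")
  case True
  have "((\<lambda>e. m + e * D) \<longlongrightarrow> m + 0 * D) (at_right 0)"
    by (intro tendsto_intros)
  then have "eventually (\<lambda>e. m + e * D < 0) (at_right 0)"
    using assms(2)[OF True] by (simp add: order_tendstoD(2))
  with eventually_at_right_less[of 0] show ?thesis
    by eventually_elim (use True in \<open>simp add: mult_pos_neg less_imp_le\<close>)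
next
  case False
  have "((\<lambda>e. s + e * (m + e * D)) \<longlongrightarrow> s + 0 * (m + 0 * D)) (at_right 0)"
    by (intro tendsto_intros)
  then have "eventually (\<lambda>e. s + e * (m + e * D) < r) (at_right 0)"
    using assms(1) False by (simp add: order_tendstoD(2))
  then show ?thesis by (rule eventually_mono) simp
qed

lemma not_dual_optimal_if_ascent_direction:
  assumes "tfg S T" and "dual_feasible S T mu"
    and "0 < (\<Sum>t\<in>{1..T}. d t)"
    and "\<forall>c\<in>tight S T mu. (\<Sum>t\<in>set c. mu t * d t) < 0"
  shows "\<not> dual_optimal S T mu"
proof -
  let ?M = "max_orders S T"
  have expand: "(\<Sum>t\<in>set c. (mu t + e * d t)\<^sup>2) = (\<Sum>t\<in>set c. (mu t)\<^sup>2) +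
      e * (2 * (\<Sum>t\<in>set c. mu t * d t) + e * (\<Sum>t\<in>set c. (d t)\<^sup>2))" for c e
    by (simp add: power2_eq_square sum.distrib sum_distrib_left algebra_simps)
  have "\<forall>c\<in>?M. eventually (\<lambda>e. (\<Sum>t\<in>set c. (mu t + e * d t)\<^sup>2) \<le> 1) (at_right 0)"
  proof
    fix c assume "c \<in> ?M"
    then have "(\<Sum>t\<in>set c. (mu t)\<^sup>2) \<le> 1"
      and "(\<Sum>t\<in>set c. (mu t)\<^sup>2) = 1 \<Longrightarrow> 2 * (\<Sum>t\<in>set c. mu t * d t) < 0"
      using assms(2,4) by (auto simp: dual_feasible_def tight_def)
    then show "eventually (\<lambda>e. (\<Sum>t\<in>set c. (mu t + e * d t)\<^sup>2) \<le> 1) (at_right 0)"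
      unfolding expand by (rule eventually_quadratic_le)
  qed
  then have "eventually (\<lambda>e. (\<forall>c\<in>?M. (\<Sum>t\<in>set c. (mu t + e * d t)\<^sup>2) \<le> 1) \<and> 0 < e) (at_right 0)"
    by (intro eventually_conj eventually_ball_finite finite_max_orders assms(1) eventually_at_right_less)
  then obtain e where e: "0 < e" "\<forall>c\<in>?M. (\<Sum>t\<in>set c. (mu t + e * d t)\<^sup>2) \<le> 1"
    using eventually_happens'[OF trivial_limit_at_right_real] by blast
  \<comment> \<open>The absolute value restores nonnegativity without changing the constraint sums.\<close>
  define mu' where "mu' t = \<bar>mu t + e * d t\<bar>" for t
  have "dual_feasible S T mu'"
    using e(2) by (simp add: dual_feasible_def mu'_def)
  moreover have "dual_obj T mu < dual_obj T mu'"
  proof -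
    have "dual_obj T mu < dual_obj T mu + e * (\<Sum>t\<in>{1..T}. d t)"
      using e(1) assms(3) by simp
    also have "\<dots> = (\<Sum>t\<in>{1..T}. mu t + e * d t)"
      by (simp add: dual_obj_def sum.distrib sum_distrib_left)
    also have "\<dots> \<le> dual_obj T mu'"
      unfolding dual_obj_def mu'_def by (intro sum_mono) simp
    finally show ?thesis .
  qed
  ultimately show ?thesis by (auto simp: dual_optimal_def not_le)
qed

lemma sum_rounds_restrict_to_order:
  fixes f g :: "nat \<Rightarrow> 'a::semiring_0"
  assumes "c \<in> max_orders S T"
  shows "(\<Sum>t\<in>{1..T}. f t * (if t \<in> set c then g t else 0)) = (\<Sum>t\<in>set c. f t * g t)"
  using max_orders_subset[OF assms] by (intro sum.mono_neutral_cong_right) simp_all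

lemma ascent_direction_of_separator:
  assumes "dual_feasible S T mu"
    and "\<forall>c\<in>tight S T mu. (\<Sum>t\<in>set c. y t * mu t) \<le> 0" and "0 < (\<Sum>t\<in>{1..T}. y t)"
  obtains d where "0 < (\<Sum>t\<in>{1..T}. d t)" "\<forall>c\<in>tight S T mu. (\<Sum>t\<in>set c. mu t * d t) < 0"
proof
  define Y where "Y = (\<Sum>t\<in>{1..T}. y t)"
  define Mu where "Mu = (\<Sum>t\<in>{1..T}. mu t)"
  have "0 < Y" "0 \<le> Mu"
    using assms(1,3) by (auto simp: Y_def Mu_def dual_feasible_def intro: sum_nonneg)
  \<comment> \<open>Tilting \<open>y\<close> towards \<open>-mu\<close> makes it strictly decrease every tight constraint,
    while \<open>\<delta>\<close> is small enough to keep the dual objective increasing.\<close>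
  define \<delta> where "\<delta> = Y / (Mu + 1)"
  have "0 < \<delta>" using \<open>0 < Y\<close> \<open>0 \<le> Mu\<close> by (simp add: \<delta>_def)
  have "(\<Sum>t\<in>{1..T}. y t - \<delta> * mu t) = Y - \<delta> * Mu"
    by (simp add: Y_def Mu_def sum_subtractf sum_distrib_left)
  also have "\<dots> = \<delta>"
    using \<open>0 \<le> Mu\<close> by (simp add: \<delta>_def field_simps)
  finally show "0 < (\<Sum>t\<in>{1..T}. y t - \<delta> * mu t)" using \<open>0 < \<delta>\<close> by simp
  show "\<forall>c\<in>tight S T mu. (\<Sum>t\<in>set c. mu t * (y t - \<delta> * mu t)) < 0"
  proof
    fix c assume c: "c \<in> tight S T mu"
    have "(\<Sum>t\<in>set c. mu t * (y t - \<delta> * mu t)) = (\<Sum>t\<in>set c. y t * mu t) - \<delta> * (\<Sum>t\<in>set c. (mu t)\<^sup>2)"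
      by (simp add: sum_subtractf sum_distrib_left power2_eq_square algebra_simps)
    also have "\<dots> \<le> - \<delta>"
      using assms(2) c by (simp add: tight_def)
    finally show "(\<Sum>t\<in>set c. mu t * (y t - \<delta> * mu t)) < 0" using \<open>0 < \<delta>\<close> by simp
  qed
qed

lemma ones_in_tight_cone:
  assumes "tfg S T" and "dual_optimal S T mu"
  shows "\<exists>a. (\<forall>c\<in>tight S T mu. 0 \<le> a c) \<and>
           (\<forall>t\<in>{1..T}. 1 = (\<Sum>c\<in>tight S T mu. a c * (if t \<in> set c then mu t else 0)))"
proof -
  have feasible: "dual_feasible S T mu"
    using assms(2) by (simp add: dual_optimal_def)
  have False
    if y: "\<forall>c\<in>tight S T mu. (\<Sum>t\<in>{1..T}. y t * (if t \<in> set c then mu t else 0)) \<le> 0"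
      "0 < (\<Sum>t\<in>{1..T}. y t * 1)"
    for y
  proof -
    have "\<forall>c\<in>tight S T mu. (\<Sum>t\<in>set c. y t * mu t) \<le> 0"
    proof
      fix c assume c: "c \<in> tight S T mu"
      then have "c \<in> max_orders S T" by (simp add: tight_def)
      with y(1) c show "(\<Sum>t\<in>set c. y t * mu t) \<le> 0"
        by (simp flip: sum_rounds_restrict_to_order)
    qed
    then obtain d where "0 < (\<Sum>t\<in>{1..T}. d t)" "\<forall>c\<in>tight S T mu. (\<Sum>t\<in>set c. mu t * d t) < 0"
      using ascent_direction_of_separator[OF feasible] y(2) by auto
    then show False
      using not_dual_optimal_if_ascent_direction[OF assms(1) feasible] assms(2) by blast
  qed
  then show ?thesis
    using farkas_alternative[OF finite_tight[OF assms(1)] finite_atLeastAtMost[of 1 T],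
        where v = "\<lambda>c t. if t \<in> set c then mu t else 0" and b = "\<lambda>_. 1"]
    by blast
qed

definition primal_of_cone :: "nat list set \<Rightarrow> (nat list \<Rightarrow> real) \<Rightarrow> (nat \<Rightarrow> real) \<Rightarrow> nat list \<Rightarrow> nat \<Rightarrow> real"
  where "primal_of_cone B a mu c t = (if c \<in> B \<and> t \<in> set c then a c * mu t else 0)"

lemma primal_of_cone_outside: "c \<notin> B \<Longrightarrow> primal_of_cone B a mu c = (\<lambda>_. 0)"
  by (simp add: primal_of_cone_def fun_eq_iff)

lemma ub_feasible_primal_of_cone:
  assumes "tfg S T" and "dual_feasible S T mu" and "B \<subseteq> max_orders S T"
    and "\<forall>c\<in>B. 0 \<le> a c"
    and ones: "\<forall>t\<in>{1..T}. 1 = (\<Sum>c\<in>B. a c * (if t \<in> set c then mu t else 0))"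
  shows "ub_feasible S T (primal_of_cone B a mu)"
  unfolding ub_feasible_def
proof (intro conjI ballI allI impI)
  fix t assume "t \<in> {1..T}"
  have "(\<Sum>c\<in>max_orders S T. primal_of_cone B a mu c t) = (\<Sum>c\<in>B. primal_of_cone B a mu c t)"
    using assms(1,3) finite_max_orders
    by (intro sum.mono_neutral_right) (auto simp: primal_of_cone_outside)
  also have "\<dots> = (\<Sum>c\<in>B. a c * (if t \<in> set c then mu t else 0))"
    by (rule sum.cong) (auto simp: primal_of_cone_def)
  finally show "(\<Sum>c\<in>max_orders S T. primal_of_cone B a mu c t) = 1"
    using ones \<open>t \<in> {1..T}\<close> by simp
next
  fix c t assume "c \<in> max_orders S T"
  then show "0 \<le> primal_of_cone B a mu c t"
    using assms(2,4) max_orders_subset[of c S T] by (auto simp: dual_feasible_def primal_of_cone_def)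
qed (simp add: primal_of_cone_def)

lemma ub_obj_primal_of_cone:
  assumes "tfg S T" and B: "B \<subseteq> tight S T mu" and a_nonneg: "\<forall>c\<in>B. 0 \<le> a c"
    and ones: "\<forall>t\<in>{1..T}. 1 = (\<Sum>c\<in>B. a c * (if t \<in> set c then mu t else 0))"
  shows "ub_obj S T (primal_of_cone B a mu) = dual_obj T mu"
proof -
  have "B \<subseteq> max_orders S T" and tight_B: "\<And>c. c \<in> B \<Longrightarrow> (\<Sum>t\<in>set c. (mu t)\<^sup>2) = 1"
    using B by (auto simp: tight_def)
  have "ub_obj S T (primal_of_cone B a mu) = (\<Sum>c\<in>B. sqrt (\<Sum>t\<in>set c. (primal_of_cone B a mu c t)\<^sup>2))"
    unfolding ub_obj_def using assms(1) \<open>B \<subseteq> max_orders S T\<close> finite_max_orders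
    by (intro sum.mono_neutral_right) (auto simp: primal_of_cone_outside)
  also have "\<dots> = (\<Sum>c\<in>B. sqrt ((a c)\<^sup>2 * (\<Sum>t\<in>set c. (mu t)\<^sup>2)))"
    by (intro sum.cong refl) (simp add: primal_of_cone_def sum_distrib_left power_mult_distrib)
  also have "\<dots> = (\<Sum>c\<in>B. a c)"
    using a_nonneg tight_B by (intro sum.cong) auto
  also have "\<dots> = (\<Sum>c\<in>B. a c * (\<Sum>t\<in>{1..T}. mu t * (if t \<in> set c then mu t else 0)))"
  proof (rule sum.cong[OF refl])
    fix c assume "c \<in> B"
    then show "a c = a c * (\<Sum>t\<in>{1..T}. mu t * (if t \<in> set c then mu t else 0))"
      using tight_B \<open>B \<subseteq> max_orders S T\<close> sum_rounds_restrict_to_order[of c S T mu mu]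
      by (auto simp: power2_eq_square)
  qed
  also have "\<dots> = (\<Sum>t\<in>{1..T}. mu t * (\<Sum>c\<in>B. a c * (if t \<in> set c then mu t else 0)))"
    unfolding sum_distrib_left by (subst sum.swap) (simp add: mult.left_commute)
  also have "\<dots> = dual_obj T mu"
    using ones by (simp add: dual_obj_def)
  finally show ?thesis .
qed

theorem lemma4:
  fixes S :: "nat \<Rightarrow> nat set" and T :: nat and mu :: "nat \<Rightarrow> real"
  assumes "tfg S T"
    and "dual_optimal S T mu"
  shows "\<exists>B. B \<subseteq> tight S T mu \<and> card B \<le> T \<and>
           (\<exists>lam. ub_optimal S T lam \<and>
              (\<forall>c\<in>max_orders S T. c \<notin> B \<longrightarrow> (\<forall>t. lam c t = 0)))"
proof -
  define v where "v c t = (if t \<in> set c then mu t else 0)" for c :: "nat list" and t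
  obtain a where "\<forall>c\<in>tight S T mu. 0 \<le> a c" "\<forall>t\<in>{1..T}. 1 = (\<Sum>c\<in>tight S T mu. a c * v c t)"
    using ones_in_tight_cone[OF assms] unfolding v_def by blast
  from conic_caratheodory[OF finite_atLeastAtMost[of 1 T] finite_tight[OF assms(1)] this]
  obtain B a' where B: "B \<subseteq> tight S T mu" "card B \<le> card {1..T}"
    and a': "\<forall>c\<in>B. 0 \<le> a' c" "\<forall>t\<in>{1..T}. 1 = (\<Sum>c\<in>B. a' c * v c t)"
    by blast
  have "dual_feasible S T mu" "B \<subseteq> max_orders S T"
    using assms(2) B(1) by (auto simp: dual_optimal_def tight_def)
  then have "ub_feasible S T (primal_of_cone B a' mu)"
    using ub_feasible_primal_of_cone[OF assms(1)] a'[unfolded v_def] by blast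
  moreover have "ub_obj S T (primal_of_cone B a' mu) = dual_obj T mu"
    using ub_obj_primal_of_cone[OF assms(1) B(1)] a'[unfolded v_def] by blast
  ultimately have "ub_optimal S T (primal_of_cone B a' mu)"
    using ub_optimal_if_obj_eq_dual_obj[OF assms(1) \<open>dual_feasible S T mu\<close>] by blast
  moreover have "\<forall>c\<in>max_orders S T. c \<notin> B \<longrightarrow> (\<forall>t. primal_of_cone B a' mu c t = 0)"
    by (simp add: primal_of_cone_def)
  ultimately show ?thesis
    using B by (intro exI[of _ B] conjI exI[of _ "primal_of_cone B a' mu"]) auto
qed

end
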